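(* Let $p$ be a density on $\mathbb{R}^d$ satisfying (A1)–(A3) (see context), in particular a Morse function with finitely many critical points and modes $m_1,\ldots,m_k$. Fix $r>0$, $C>0$, let $\epsilon_n=(r\log n/n)^{1/d}$ and $t_n(x)=\left(\frac{C\log n}{n\,p(x)}\right)^{1/d}$. Then there exist positive constants $c_1,c_2$ such that, for all sufficiently large $n$, for every $x\in\mathcal{C}$ with $x\notin\bigcup_{j=1}^kB(m_j,c_1\epsilon_n)$, there exists a ball $B$ of radius $2\epsilon_n$ such that: 1. $\max_{z\in B}\|z-x\|\le c_2t_n(x)$; 2. $x\notin B$; 3. $p(z)>p(x)$ for all $z\in B$.
   Context: (A1) $p$ is supported on a compact set $\mathcal{C}$, bounded and continuous, with $\inf_{x\in\mathcal{C}}p(x)\ge a>0$. (A2) $p$ has bounded continuous first, second and third derivatives. (A3) $p$ is Morse (Hessian nondegenerate at every critical point) with finitely many critical points. Modes are strict local maxima. *)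

theory Defs
  imports "HOL-Analysis.Analysis"
begin

definition strict_local_max :: "('a::metric_space \<Rightarrow> real) \<Rightarrow> 'a \<Rightarrow> bool" where
  "strict_local_max f m \<longleftrightarrow> (\<exists>e>0. \<forall>y\<in>ball m e. y \<noteq> m \<longrightarrow> f y < f m)"

definition morse :: "('a::euclidean_space \<Rightarrow> ('a \<Rightarrow>\<^sub>L real))
                     \<Rightarrow> ('a \<Rightarrow> ('a \<Rightarrow>\<^sub>L ('a \<Rightarrow>\<^sub>L real))) \<Rightarrow> bool" where
  "morse D1 D2 \<longleftrightarrow> finite {x. D1 x = 0} \<and>
     (\<forall>x. D1 x = 0 \<longrightarrow> (\<forall>h. D2 x h = 0 \<longrightarrow> h = 0))"

end

theory Submission
  imports Defs "HOL-Real_Asymp.Real_Asymp"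
begin

(* If the gradient at x is large compared with \<epsilon>, Taylor's formula shows that the ball of radius
   2\<epsilon> whose centre lies 3\<epsilon> from x in the direction of steepest ascent lies strictly above p x.
   Otherwise x is within O(\<epsilon>) of a critical point m: near each of the finitely many critical
   points the Morse condition bounds the gradient below by a multiple of the distance to m, and
   compactness bounds it below elsewhere. If m is a mode, x is one of the excluded points. If not,
   the Hessian at m, being symmetric and nondegenerate, has a direction u of positive curvature,
   and the ball of radius 2\<epsilon> around m + L\<epsilon>u lies above p x for a large constant L, because
   p - p m grows like (L\<epsilon>)^2 there while p x - p m = O(\<epsilon>^2). Both balls lie within O(\<epsilon>) of x,
   and for \<epsilon> = \<epsilon>_n this is O(t_n(x)) since p is bounded above. *)

lemma has_vector_derivative_along_line:
  fixes g :: "'a::real_normed_vector \<Rightarrow> 'b::real_normed_vector"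
  assumes "(g has_derivative blinfun_apply G) (at (x + t *\<^sub>R h))"
  shows "((\<lambda>s. g (x + s *\<^sub>R h)) has_vector_derivative G h) (at t)"
proof -
  have "((\<lambda>s. x + s *\<^sub>R h) has_derivative (\<lambda>s. s *\<^sub>R h)) (at t)"
    by (auto intro!: derivative_eq_intros)
  from has_derivative_compose[OF this assms]
  show ?thesis
    by (simp add: has_vector_derivative_def o_def blinfun.scaleR_right)
qed

lemma bilinear_form_bound:
  fixes Q :: "'a::real_normed_vector \<Rightarrow>\<^sub>L 'a \<Rightarrow>\<^sub>L real"
  shows "\<bar>Q v w\<bar> \<le> norm Q * norm v * norm w"
proof -
  have "\<bar>Q v w\<bar> \<le> norm (Q v) * norm w"
    using norm_blinfun[of "Q v" w] by simp
  also have "\<dots> \<le> norm Q * norm v * norm w"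
    by (intro mult_right_mono norm_blinfun) auto
  finally show ?thesis .
qed

lemma quadratic_form_scaleR:
  fixes Q :: "'a::real_normed_vector \<Rightarrow>\<^sub>L 'a \<Rightarrow>\<^sub>L real"
  shows "Q (c *\<^sub>R v) (c *\<^sub>R v) = c\<^sup>2 * Q v v"
  by (simp add: blinfun.scaleR_left blinfun.scaleR_right power2_eq_square)

lemma quadratic_form_lower_bound_near_ray:
  fixes Q :: "'a::real_normed_vector \<Rightarrow>\<^sub>L 'a \<Rightarrow>\<^sub>L real"
  assumes "norm u = 1" and "0 \<le> s"
  shows "s\<^sup>2 * Q u u - norm Q * (2 * s * norm e + (norm e)\<^sup>2) \<le> Q (s *\<^sub>R u + e) (s *\<^sub>R u + e)"
proof -
  have "Q (s *\<^sub>R u + e) (s *\<^sub>R u + e) = s\<^sup>2 * Q u u + s * (Q u e + Q e u) + Q e e"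
    by (simp add: blinfun.add_left blinfun.add_right blinfun.scaleR_left blinfun.scaleR_right
        power2_eq_square algebra_simps)
  moreover have "\<bar>Q u e + Q e u\<bar> \<le> 2 * norm Q * norm e"
    using bilinear_form_bound[of Q u e] bilinear_form_bound[of Q e u] assms(1) by simp
  then have "- (2 * norm Q * norm e) \<le> Q u e + Q e u" by (simp add: abs_le_iff)
  from mult_left_mono[OF this assms(2)]
  have "- (s * (2 * norm Q * norm e)) \<le> s * (Q u e + Q e u)" by simp
  moreover have "- (norm Q * (norm e)\<^sup>2) \<le> Q e e"
    using bilinear_form_bound[of Q e e] by (simp add: power2_eq_square mult.assoc)
  ultimately show ?thesis by (simp add: algebra_simps)
qed

lemma quadratic_model_upper_bound:
  fixes f :: "'a::real_normed_vector \<Rightarrow> real" and Q :: "'a \<Rightarrow>\<^sub>L 'a \<Rightarrow>\<^sub>L real"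
  assumes model: "\<bar>f x - f m - Q (x - m) (x - m) / 2\<bar> \<le> \<delta> * (norm (x - m))\<^sup>2"
    and "0 \<le> \<delta>" and "norm (x - m) \<le> \<rho>"
  shows "f x \<le> f m + (norm Q / 2 + \<delta>) * \<rho>\<^sup>2"
proof -
  have "(norm (x - m))\<^sup>2 \<le> \<rho>\<^sup>2" using assms(3) by (simp add: power_mono)
  moreover have "Q (x - m) (x - m) \<le> norm Q * (norm (x - m))\<^sup>2"
    using bilinear_form_bound[of Q "x - m" "x - m"] by (simp add: power2_eq_square mult.assoc)
  ultimately have "Q (x - m) (x - m) / 2 + \<delta> * (norm (x - m))\<^sup>2 \<le> (norm Q / 2 + \<delta>) * \<rho>\<^sup>2"
    using \<open>0 \<le> \<delta>\<close> mult_left_mono[of "(norm (x - m))\<^sup>2" "\<rho>\<^sup>2" "norm Q"]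
      mult_left_mono[of "(norm (x - m))\<^sup>2" "\<rho>\<^sup>2" \<delta>] by (simp add: algebra_simps)
  then show ?thesis using abs_le_D1[OF model] by linarith
qed

lemma quadratic_model_lower_bound_near_ray:
  fixes f :: "'a::real_normed_vector \<Rightarrow> real" and Q :: "'a \<Rightarrow>\<^sub>L 'a \<Rightarrow>\<^sub>L real"
  assumes model: "\<bar>f z - f m - Q (z - m) (z - m) / 2\<bar> \<le> \<delta> * (norm (z - m))\<^sup>2"
    and "0 \<le> \<delta>" and u: "norm u = 1" and "0 \<le> s" and near_ray: "norm (z - m - s *\<^sub>R u) \<le> r"
  shows "f m + (s\<^sup>2 * Q u u - norm Q * (2 * s * r + r\<^sup>2)) / 2 - \<delta> * (s + r)\<^sup>2 \<le> f z"
proof -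
  define e where "e = z - m - s *\<^sub>R u"
  have "z - m = s *\<^sub>R u + e" by (simp add: e_def)
  have e: "norm e \<le> r" using near_ray by (simp add: e_def)
  then have "0 \<le> r" using norm_ge_zero[of e] by linarith
  have "norm Q * (2 * s * norm e + (norm e)\<^sup>2) \<le> norm Q * (2 * s * r + r\<^sup>2)"
    using e \<open>0 \<le> s\<close> by (intro mult_left_mono add_mono power_mono) auto
  with quadratic_form_lower_bound_near_ray[OF u \<open>0 \<le> s\<close>, of Q e]
  have "s\<^sup>2 * Q u u - norm Q * (2 * s * r + r\<^sup>2) \<le> Q (z - m) (z - m)"
    unfolding \<open>z - m = s *\<^sub>R u + e\<close> by linarith
  moreover have "norm (z - m) \<le> s + r"
    using norm_triangle_ineq[of "s *\<^sub>R u" e] e u \<open>0 \<le> s\<close> by (simp add: \<open>z - m = s *\<^sub>R u + e\<close>)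
  then have "\<delta> * (norm (z - m))\<^sup>2 \<le> \<delta> * (s + r)\<^sup>2"
    using \<open>0 \<le> \<delta>\<close> by (intro mult_left_mono power_mono) auto
  ultimately show ?thesis using abs_le_D2[OF model] by (simp add: field_simps)
qed

lemma blinfun_inj_bounded_below:
  fixes B :: "'a::euclidean_space \<Rightarrow>\<^sub>L 'b::real_normed_vector"
  assumes inj: "\<And>h. B h = 0 \<Longrightarrow> h = 0"
  shows "\<exists>k>0. \<forall>h. k * norm h \<le> norm (B h)"
proof -
  have "continuous_on (sphere 0 1) (\<lambda>h. norm (B h))"
    by (intro continuous_intros)
  from continuous_attains_inf[OF compact_sphere _ this]
  obtain h0 :: 'a where h0: "norm h0 = 1" "\<And>h. norm h = 1 \<Longrightarrow> norm (B h0) \<le> norm (B h)"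
    by auto
  have "norm (B h0) * norm h \<le> norm (B h)" for h
  proof (cases "h = 0")
    case False
    then have "norm (B h0) \<le> norm (B ((1 / norm h) *\<^sub>R h))" by (intro h0(2)) simp
    also have "\<dots> = norm (B h) / norm h" by (simp add: blinfun.scaleR_right)
    finally show ?thesis using False by (simp add: field_simps)
  qed simp
  moreover have "norm (B h0) > 0" using inj h0(1) by fastforce
  ultimately show ?thesis by blast
qed

lemma exists_unit_vector_norm_le:
  fixes g :: "'a::euclidean_space \<Rightarrow>\<^sub>L real"
  shows "\<exists>u. norm u = 1 \<and> norm g \<le> g u"
proof -
  have "continuous_on (sphere 0 1) (blinfun_apply g)"
    by (intro continuous_intros)
  from continuous_attains_sup[OF compact_sphere _ this]
  obtain u :: 'a where u: "norm u = 1" "\<And>h. norm h = 1 \<Longrightarrow> g h \<le> g u"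
    by auto
  have "\<bar>g h\<bar> \<le> g u * norm h" for h
  proof (cases "h = 0")
    case False
    have "g ((1 / norm h) *\<^sub>R h) \<le> g u" "g ((- 1 / norm h) *\<^sub>R h) \<le> g u"
      using False by (auto intro!: u(2))
    then show ?thesis
      using False by (simp add: blinfun.scaleR_right blinfun.minus_right field_simps abs_le_iff)
  qed simp
  moreover have "0 \<le> g u" using u(2)[of "- u"] u(1) by (simp add: blinfun.minus_right)
  ultimately show ?thesis using u(1) by (metis norm_blinfun_bound real_norm_def)
qed

lemma seminegative_form_isotropic_imp_zero:
  fixes Q :: "'a::real_normed_vector \<Rightarrow>\<^sub>L 'a \<Rightarrow>\<^sub>L real"
  assumes sym: "\<And>v w. Q v w = Q w v" and nonpos: "\<And>v. Q v v \<le> 0" and "Q u u = 0"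
  shows "Q u = 0"
proof (rule blinfun_eqI)
  fix w
  define b where "b = Q u w"
  define q where "q = - Q w w"
  have q: "q \<ge> 0" using nonpos by (simp add: q_def)
  define t where "t = b / (q + 1)"
  have "Q (u + t *\<^sub>R w) (u + t *\<^sub>R w) = 2 * (t * b) - t * t * q"
    using \<open>Q u u = 0\<close> sym[of w u]
    by (simp add: b_def q_def blinfun.add_left blinfun.add_right blinfun.scaleR_left
        blinfun.scaleR_right algebra_simps)
  show "Q u w = (0 :: 'a \<Rightarrow>\<^sub>L real) w"
  proof (rule ccontr)
    assume "Q u w \<noteq> (0 :: 'a \<Rightarrow>\<^sub>L real) w"
    then have "0 < b * b" by (simp add: b_def not_square_less_zero less_le)
    then have "0 < t * b" using q by (simp add: t_def)
    moreover have "t * t * q \<le> t * b"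
    proof -
      have "t * t * q = (t * b) * (q / (q + 1))" by (simp add: t_def)
      also have "\<dots> \<le> t * b" using q \<open>0 < t * b\<close> by (intro mult_left_le) auto
      finally show ?thesis .
    qed
    ultimately show False
      using \<open>Q (u + t *\<^sub>R w) (u + t *\<^sub>R w) = 2 * (t * b) - t * t * q\<close>
        nonpos[of "u + t *\<^sub>R w"] by linarith
  qed
qed

lemma seminegative_form_negative_definite:
  fixes Q :: "'a::euclidean_space \<Rightarrow>\<^sub>L 'a \<Rightarrow>\<^sub>L real"
  assumes sym: "\<And>v w. Q v w = Q w v" and nonpos: "\<And>v. Q v v \<le> 0"
    and inj: "\<And>h. Q h = 0 \<Longrightarrow> h = 0"
  shows "\<exists>\<mu>>0. \<forall>v. Q v v \<le> - \<mu> * (norm v)\<^sup>2"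
proof -
  have "continuous_on (sphere 0 1) (\<lambda>v. Q v v)"
    by (intro continuous_intros)
  from continuous_attains_sup[OF compact_sphere _ this]
  obtain u :: 'a where u: "norm u = 1" "\<And>v. norm v = 1 \<Longrightarrow> Q v v \<le> Q u u"
    by auto
  have "Q u u \<noteq> 0"
    using seminegative_form_isotropic_imp_zero[OF sym nonpos] inj u(1) by fastforce
  then have "- Q u u > 0" using nonpos[of u] by linarith
  moreover have "Q v v \<le> - (- Q u u) * (norm v)\<^sup>2" for v
  proof (cases "v = 0")
    case False
    have "Q ((1 / norm v) *\<^sub>R v) ((1 / norm v) *\<^sub>R v) \<le> Q u u"
      using False by (intro u(2)) simp
    then show ?thesis
      using False by (simp add: quadratic_form_scaleR field_simps)
  qed simp
  ultimately show ?thesis by blast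
qed

lemma finite_pos_lower_bound:
  fixes h :: "'a \<Rightarrow> real"
  assumes "finite S" and "\<And>x. x \<in> S \<Longrightarrow> 0 < h x"
  shows "\<exists>d>0. \<forall>x\<in>S. d \<le> h x"
  using assms by (intro exI[of _ "Min (insert 1 (h ` S))"]) auto

lemma compact_continuous_pos_lower_bound:
  fixes h :: "'a::topological_space \<Rightarrow> real"
  assumes "compact S" and "continuous_on S h" and "\<And>x. x \<in> S \<Longrightarrow> 0 < h x"
  shows "\<exists>d>0. \<forall>x\<in>S. d \<le> h x"
proof (cases "S = {}")
  case False
  from continuous_attains_inf[OF assms(1) False assms(2)] assms(3) show ?thesis by blast
qed (auto intro: exI[of _ 1])

definition uphill_ball :: "('a::metric_space \<Rightarrow> real) \<Rightarrow> 'a \<Rightarrow> real \<Rightarrow> real \<Rightarrow> bool" where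
  "uphill_ball f x \<rho> R \<longleftrightarrow>
     (\<exists>c. (\<forall>z\<in>cball c \<rho>. dist z x \<le> R) \<and> x \<notin> cball c \<rho> \<and> (\<forall>z\<in>cball c \<rho>. f z > f x))"

lemma uphill_ballI:
  assumes "\<rho> < dist x c" and "dist x c + \<rho> \<le> R" and "\<And>z. dist c z \<le> \<rho> \<Longrightarrow> f x < f z"
  shows "uphill_ball f x \<rho> R"
  unfolding uphill_ball_def
proof (intro exI[of _ c] conjI ballI)
  fix z assume "z \<in> cball c \<rho>"
  then show "dist z x \<le> R"
    using assms(2) dist_triangle[of z x c] by (simp add: dist_commute)
qed (use assms in auto)

lemma uphill_ball_mono: "uphill_ball f x \<rho> R \<Longrightarrow> R \<le> R' \<Longrightarrow> uphill_ball f x \<rho> R'"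
  unfolding uphill_ball_def by (meson order_trans)

lemma powr_rescale_le:
  fixes q B C r t k :: real
  assumes "0 < q" "q \<le> B" "0 < C" "0 \<le> r" "0 \<le> t" "0 \<le> k"
  shows "(r * t) powr k \<le> (r * B / C) powr k * (C * t / q) powr k"
proof -
  have "r * t \<le> r * B / C * (C * t / q)"
    using assms mult_left_mono[of q B "r * t"] by (simp add: field_simps)
  then have "(r * t) powr k \<le> (r * B / C * (C * t / q)) powr k"
    using assms by (intro powr_mono2) auto
  also have "\<dots> = (r * B / C) powr k * (C * t / q) powr k"
    by (rule powr_mult; use assms in simp)
  finally show ?thesis .
qed

lemma filterlim_ln_over_n_powr_at_right_0:
  fixes r k :: real
  assumes "0 < r" "0 < k"
  shows "filterlim (\<lambda>n. (r * ln (real n) / real n) powr k) (at_right 0) sequentially"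
  using assms by real_asymp

lemma uphill_balls_at_sample_scale:
  fixes f :: "'a::metric_space \<Rightarrow> real" and r C B k c1 c2 :: real
  assumes balls: "\<forall>\<^sub>F \<epsilon> in at_right 0. \<forall>x\<in>X.
      x \<notin> (\<Union>m\<in>S. ball m (c1 * \<epsilon>)) \<longrightarrow> uphill_ball f x (2 * \<epsilon>) (c2 * \<epsilon>)"
    and "0 < c2" "0 < r" "0 < C" and upper: "\<And>x. f x \<le> B" and pos: "\<And>x. x \<in> X \<Longrightarrow> 0 < f x"
    and "0 < k"
  shows "\<exists>N. \<forall>n\<ge>N. \<forall>x\<in>X. x \<notin> (\<Union>m\<in>S. ball m (c1 * (r * ln (real n) / real n) powr k)) \<longrightarrow>
    uphill_ball f x (2 * (r * ln (real n) / real n) powr k)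
      (c2 * (r * B / C) powr k * (C * ln (real n) / (real n * f x)) powr k)"
proof -
  define eps where "eps n = (r * ln (real n) / real n) powr k" for n :: nat
  have "\<forall>\<^sub>F n in sequentially. 1 \<le> n \<and> (\<forall>x\<in>X.
      x \<notin> (\<Union>m\<in>S. ball m (c1 * eps n)) \<longrightarrow> uphill_ball f x (2 * eps n) (c2 * eps n))"
    using eventually_ge_at_top eventually_compose_filterlim[OF balls
        filterlim_ln_over_n_powr_at_right_0[OF \<open>0 < r\<close> \<open>0 < k\<close>]]
    by (intro eventually_conj) (auto simp: eps_def)
  then obtain N where N: "\<And>n. N \<le> n \<Longrightarrow> 1 \<le> n \<and> (\<forall>x\<in>X.
      x \<notin> (\<Union>m\<in>S. ball m (c1 * eps n)) \<longrightarrow> uphill_ball f x (2 * eps n) (c2 * eps n))"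
    by (auto simp: eventually_at_top_linorder)
  have "uphill_ball f x (2 * eps n)
      (c2 * (r * B / C) powr k * (C * ln (real n) / (real n * f x)) powr k)"
    if "N \<le> n" "x \<in> X" "x \<notin> (\<Union>m\<in>S. ball m (c1 * eps n))" for n x
  proof -
    have "(r * (ln (real n) / real n)) powr k
        \<le> (r * B / C) powr k * (C * (ln (real n) / real n) / f x) powr k"
      using N[OF \<open>N \<le> n\<close>] \<open>0 < r\<close> \<open>0 < k\<close>
      by (intro powr_rescale_le[OF pos[OF \<open>x \<in> X\<close>] upper \<open>0 < C\<close>]) auto
    then have "eps n \<le> (r * B / C) powr k * (C * ln (real n) / (real n * f x)) powr k"
      by (simp add: eps_def)
    moreover have "uphill_ball f x (2 * eps n) (c2 * eps n)"
      using N[OF \<open>N \<le> n\<close>] that by blast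
    ultimately show ?thesis
      using \<open>0 < c2\<close> by (elim uphill_ball_mono) (simp add: mult.assoc)
  qed
  then show ?thesis unfolding eps_def by blast
qed

locale twice_cont_differentiable =
  fixes f :: "'a::euclidean_space \<Rightarrow> real"
    and f' :: "'a \<Rightarrow> ('a \<Rightarrow>\<^sub>L real)"
    and f'' :: "'a \<Rightarrow> ('a \<Rightarrow>\<^sub>L ('a \<Rightarrow>\<^sub>L real))"
  assumes has_derivative_f: "\<And>x. (f has_derivative blinfun_apply (f' x)) (at x)"
    and has_derivative_f': "\<And>x. (f' has_derivative blinfun_apply (f'' x)) (at x)"
    and continuous_f'': "continuous_on UNIV f''"
begin

lemma has_real_derivative_along_line:
  "((\<lambda>s. f (x + s *\<^sub>R h)) has_real_derivative f' (x + t *\<^sub>R h) h) (at t)"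
  using has_vector_derivative_along_line[OF has_derivative_f]
  by (simp add: has_real_derivative_iff_has_vector_derivative)

lemma has_real_derivative_along_line':
  "((\<lambda>s. f' (x + s *\<^sub>R h) w) has_real_derivative f'' (x + t *\<^sub>R h) h w) (at t)"
  using blinfun.bounded_linear_left[THEN bounded_linear.has_vector_derivative,
      OF has_vector_derivative_along_line[OF has_derivative_f']]
  by (simp add: has_real_derivative_iff_has_vector_derivative)

lemma f'_lipschitz:
  assumes bound: "\<And>x. norm (f'' x) \<le> M"
  shows "norm (f' y - f' x) \<le> M * norm (y - x)"
  using differentiable_bound[of UNIV f' "\<lambda>x. blinfun_apply (f'' x)" M y x] has_derivative_f' bound
  by (simp add: norm_blinfun.rep_eq[symmetric])

lemma taylor_lower_bound:
  assumes bound: "\<And>x. norm (f'' x) \<le> M"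
  shows "f x + f' x h - M * (norm h)\<^sup>2 \<le> f (x + h)"
proof -
  from MVT2[OF zero_less_one has_real_derivative_along_line]
  obtain z where z: "0 < z" "z < 1" "f (x + h) - f x = f' (x + z *\<^sub>R h) h"
    by (metis add.right_neutral diff_zero mult_1 scale_one scale_zero_left)
  have "\<bar>f' (x + z *\<^sub>R h) h - f' x h\<bar> \<le> norm (f' (x + z *\<^sub>R h) - f' x) * norm h"
    by (metis blinfun.diff_left norm_blinfun real_norm_def)
  also have "\<dots> \<le> (M * norm (z *\<^sub>R h)) * norm h"
    using f'_lipschitz[OF bound, of "x + z *\<^sub>R h" x] by (intro mult_right_mono) auto
  also have "\<dots> \<le> (M * norm h) * norm h"
    using z order_trans[OF norm_ge_zero bound]
    by (intro mult_right_mono mult_left_mono) (auto simp: mult_left_le_one_le)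
  finally show ?thesis using z(3) by (simp add: power2_eq_square)
qed

lemma second_order_expansion:
  assumes "e > 0"
  shows "\<exists>d>0. \<forall>y. norm y < d \<longrightarrow> \<bar>f (x + y) - f x - f' x y - f'' x y y / 2\<bar> \<le> e * (norm y)\<^sup>2"
proof -
  from has_derivative_f'[of x] assms obtain d where d: "d > 0"
    "\<forall>y. norm (y - x) < d \<longrightarrow> norm (f' y - f' x - f'' x (y - x)) \<le> e * norm (y - x)"
    unfolding has_derivative_at_alt by blast
  have "\<bar>f (x + y) - f x - f' x y - f'' x y y / 2\<bar> \<le> e * (norm y)\<^sup>2" if y: "norm y < d" for y
  proof -
    define g where "g t = f (x + t *\<^sub>R y) - t * f' x y - t\<^sup>2 / 2 * f'' x y y" for t
    have "(g has_real_derivative (f' (x + t *\<^sub>R y) y - f' x y - t * f'' x y y)) (at t)" for t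
      unfolding g_def by (auto intro!: derivative_eq_intros has_real_derivative_along_line)
    from MVT2[OF zero_less_one this] obtain z where z: "0 < z" "z < 1"
      "g 1 - g 0 = f' (x + z *\<^sub>R y) y - f' x y - z * f'' x y y" by auto
    have nz: "norm (z *\<^sub>R y) \<le> norm y" using z by (simp add: mult_left_le_one_le)
    have "f' (x + z *\<^sub>R y) y - f' x y - z * f'' x y y
        = (f' (x + z *\<^sub>R y) - f' x - f'' x (z *\<^sub>R y)) y"
      by (simp add: blinfun.diff_left blinfun.scaleR_left blinfun.scaleR_right)
    then have "\<bar>g 1 - g 0\<bar> \<le> norm (f' (x + z *\<^sub>R y) - f' x - f'' x (z *\<^sub>R y)) * norm y"
      using z(3) norm_blinfun by (metis real_norm_def)
    also have "\<dots> \<le> (e * norm (z *\<^sub>R y)) * norm y"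
      using d(2)[rule_format, of "x + z *\<^sub>R y"] nz y by (intro mult_right_mono) auto
    also have "\<dots> \<le> (e * norm y) * norm y"
      using nz assms by (intro mult_right_mono mult_left_mono) auto
    finally show ?thesis by (simp add: g_def power2_eq_square)
  qed
  then show ?thesis using d(1) by blast
qed

lemma second_difference_mean_value:
  assumes "0 < s"
  obtains y where "norm (y - x) \<le> s * (norm v + norm w)"
    and "f (x + s *\<^sub>R v + s *\<^sub>R w) - f (x + s *\<^sub>R w) - f (x + s *\<^sub>R v) + f x = s\<^sup>2 * f'' y v w"
proof -
  define h where "h t = f (x + s *\<^sub>R v + t *\<^sub>R w) - f (x + t *\<^sub>R w)" for t
  have "(h has_real_derivative f' (x + s *\<^sub>R v + t *\<^sub>R w) w - f' (x + t *\<^sub>R w) w) (at t)" for t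
    unfolding h_def by (auto intro!: derivative_eq_intros has_real_derivative_along_line)
  from MVT2[OF assms this] obtain \<xi> where \<xi>: "0 < \<xi>" "\<xi> < s"
    "h s - h 0 = s * (f' (x + s *\<^sub>R v + \<xi> *\<^sub>R w) w - f' (x + \<xi> *\<^sub>R w) w)" by auto
  from MVT2[OF assms has_real_derivative_along_line'[of "x + \<xi> *\<^sub>R w" v w]]
  obtain \<eta> where \<eta>: "0 < \<eta>" "\<eta> < s"
    "f' (x + \<xi> *\<^sub>R w + s *\<^sub>R v) w - f' (x + \<xi> *\<^sub>R w) w = s * f'' (x + \<xi> *\<^sub>R w + \<eta> *\<^sub>R v) v w"
    by auto
  show ?thesis
  proof
    have "norm (\<xi> *\<^sub>R w + \<eta> *\<^sub>R v) \<le> \<xi> * norm w + \<eta> * norm v"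
      using \<xi> \<eta> norm_triangle_ineq[of "\<xi> *\<^sub>R w" "\<eta> *\<^sub>R v"] by simp
    also have "\<dots> \<le> s * (norm v + norm w)"
      using \<xi> \<eta> mult_right_mono[of \<xi> s "norm w"] mult_right_mono[of \<eta> s "norm v"]
      by (simp add: distrib_left)
    finally show "norm (x + \<xi> *\<^sub>R w + \<eta> *\<^sub>R v - x) \<le> s * (norm v + norm w)" by simp
    show "f (x + s *\<^sub>R v + s *\<^sub>R w) - f (x + s *\<^sub>R w) - f (x + s *\<^sub>R v) + f x
        = s\<^sup>2 * f'' (x + \<xi> *\<^sub>R w + \<eta> *\<^sub>R v) v w"
      using \<xi>(3) \<eta>(3) by (simp add: h_def power2_eq_square algebra_simps)
  qed
qed

lemma second_difference_tendsto:
  "((\<lambda>s. (f (x + s *\<^sub>R v + s *\<^sub>R w) - f (x + s *\<^sub>R w) - f (x + s *\<^sub>R v) + f x) / s\<^sup>2)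
     \<longlongrightarrow> f'' x v w) (at_right 0)"
proof -
  have "\<forall>s. \<exists>y. 0 < s \<longrightarrow> norm (y - x) \<le> s * (norm v + norm w) \<and>
      f (x + s *\<^sub>R v + s *\<^sub>R w) - f (x + s *\<^sub>R w) - f (x + s *\<^sub>R v) + f x = s\<^sup>2 * f'' y v w"
    by (metis second_difference_mean_value)
  then obtain y where y: "\<And>s. 0 < s \<Longrightarrow> norm (y s - x) \<le> s * (norm v + norm w)"
    "\<And>s. 0 < s \<Longrightarrow>
      f (x + s *\<^sub>R v + s *\<^sub>R w) - f (x + s *\<^sub>R w) - f (x + s *\<^sub>R v) + f x = s\<^sup>2 * f'' (y s) v w"
    by metis
  have "((\<lambda>s. s * (norm v + norm w)) \<longlongrightarrow> 0) (at_right 0)"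
    by (auto intro!: tendsto_eq_intros)
  then have "((\<lambda>s. y s - x) \<longlongrightarrow> 0) (at_right 0)"
    by (rule Lim_null_comparison[rotated])
      (auto intro: eventually_mono[OF eventually_at_right_less] y(1))
  then have "(y \<longlongrightarrow> x) (at_right 0)" by (simp add: Lim_null[symmetric])
  moreover have "isCont f'' x"
    using continuous_f'' by (simp add: continuous_on_eq_continuous_at)
  ultimately have "((\<lambda>s. f'' (y s)) \<longlongrightarrow> f'' x) (at_right 0)"
    by (rule isCont_tendsto_compose[rotated])
  then have "((\<lambda>s. f'' (y s) v w) \<longlongrightarrow> f'' x v w) (at_right 0)"
    by (intro blinfun.tendsto tendsto_const)
  moreover have "\<forall>\<^sub>F s in at_right 0. f'' (y s) v w
      = (f (x + s *\<^sub>R v + s *\<^sub>R w) - f (x + s *\<^sub>R w) - f (x + s *\<^sub>R v) + f x) / s\<^sup>2"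
    using eventually_at_right_less by eventually_elim (simp add: y(2))
  ultimately show ?thesis by (rule Lim_transform_eventually)
qed

lemma f''_symmetric: "f'' x v w = f'' x w v"
proof (rule tendsto_unique[OF trivial_limit_at_right_real second_difference_tendsto])
  have "x + s *\<^sub>R w + s *\<^sub>R v = x + s *\<^sub>R v + s *\<^sub>R w" for s
    by (simp add: algebra_simps)
  then show "((\<lambda>s. (f (x + s *\<^sub>R v + s *\<^sub>R w) - f (x + s *\<^sub>R w) - f (x + s *\<^sub>R v) + f x) / s\<^sup>2)
     \<longlongrightarrow> f'' x w v) (at_right 0)"
    using second_difference_tendsto[of x w v] by (simp add: algebra_simps)
qed

lemma gradient_bounded_below_near_critical:
  assumes crit: "f' m = 0" and nondeg: "\<And>h. f'' m h = 0 \<Longrightarrow> h = 0"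
  shows "\<exists>l>0. \<exists>d>0. \<forall>x. norm (x - m) < d \<longrightarrow> l * norm (x - m) \<le> norm (f' x)"
proof -
  obtain k where k: "k > 0" "\<And>h. k * norm h \<le> norm (f'' m h)"
    using blinfun_inj_bounded_below[OF nondeg] by blast
  from has_derivative_f'[of m] k(1) obtain d where d: "d > 0"
    "\<forall>x. norm (x - m) < d \<longrightarrow> norm (f' x - f' m - f'' m (x - m)) \<le> k / 2 * norm (x - m)"
    unfolding has_derivative_at_alt by (meson half_gt_zero)
  have "k / 2 * norm (x - m) \<le> norm (f' x)" if "norm (x - m) < d" for x
  proof -
    have "k * norm (x - m) \<le> norm (f' x) + norm (f' x - f' m - f'' m (x - m))"
      using k(2)[of "x - m"] crit norm_triangle_ineq4[of "f' x" "f' x - f'' m (x - m)"] by simp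
    then show ?thesis using d(2) that by force
  qed
  then show ?thesis using k(1) d(1) by (meson half_gt_zero)
qed

lemma strict_local_max_if_negative_definite:
  assumes crit: "f' m = 0" and "\<mu> > 0" and negdef: "\<And>v. f'' m v v \<le> - \<mu> * (norm v)\<^sup>2"
  shows "strict_local_max f m"
proof -
  obtain d where d: "d > 0"
    "\<forall>y. norm y < d \<longrightarrow> \<bar>f (m + y) - f m - f' m y - f'' m y y / 2\<bar> \<le> \<mu> / 4 * (norm y)\<^sup>2"
    using second_order_expansion[of "\<mu> / 4"] \<open>\<mu> > 0\<close> by auto
  have "f y < f m" if "y \<in> ball m d" "y \<noteq> m" for y
  proof -
    have "norm (y - m) < d" "0 < norm (y - m)"
      using that by (auto simp: dist_norm norm_minus_commute)
    then have "\<bar>f y - f m - f'' m (y - m) (y - m) / 2\<bar> \<le> \<mu> / 4 * (norm (y - m))\<^sup>2"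
      using d(2)[rule_format, of "y - m"] crit by simp
    then have "f y \<le> f m + f'' m (y - m) (y - m) / 2 + \<mu> / 4 * (norm (y - m))\<^sup>2"
      by linarith
    also have "\<dots> \<le> f m - \<mu> / 4 * (norm (y - m))\<^sup>2"
      using negdef[of "y - m"] by simp
    also have "\<dots> < f m"
      using \<open>\<mu> > 0\<close> \<open>0 < norm (y - m)\<close> by simp
    finally show ?thesis .
  qed
  then show ?thesis unfolding strict_local_max_def using d(1) by blast
qed

lemma exists_ascent_direction_at_saddle:
  assumes crit: "f' m = 0" and nondeg: "\<And>h. f'' m h = 0 \<Longrightarrow> h = 0"
    and not_max: "\<not> strict_local_max f m"
  shows "\<exists>u. norm u = 1 \<and> 0 < f'' m u u"
proof -
  have "\<exists>v. 0 < f'' m v v"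
  proof (rule ccontr)
    assume "\<nexists>v. 0 < f'' m v v"
    then have "\<And>v. f'' m v v \<le> 0" by (simp add: not_less)
    from seminegative_form_negative_definite[OF f''_symmetric this nondeg]
    show False
      using strict_local_max_if_negative_definite[OF crit] not_max by blast
  qed
  then obtain v where v: "0 < f'' m v v" by blast
  then have "v \<noteq> 0" by auto
  then show ?thesis
    using v by (intro exI[of _ "(1 / norm v) *\<^sub>R v"]) (simp add: quadratic_form_scaleR)
qed

lemma uphill_ball_large_gradient:
  assumes bound: "\<And>x. norm (f'' x) \<le> M" and "0 < \<epsilon>" and large: "25 * M * \<epsilon> < norm (f' x)"
  shows "uphill_ball f x (2 * \<epsilon>) (5 * \<epsilon>)"
proof -
  obtain u where u: "norm u = 1" "norm (f' x) \<le> f' x u"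
    using exists_unit_vector_norm_le by blast
  define c where "c = x + (3 * \<epsilon>) *\<^sub>R u"
  show ?thesis
  proof (rule uphill_ballI)
    have "dist x c = 3 * \<epsilon>" using u \<open>0 < \<epsilon>\<close> by (simp add: c_def dist_norm)
    then show "2 * \<epsilon> < dist x c" "dist x c + 2 * \<epsilon> \<le> 5 * \<epsilon>" using \<open>0 < \<epsilon>\<close> by auto
  next
    fix z assume "dist c z \<le> 2 * \<epsilon>"
    define e where "e = z - c"
    have e: "norm e \<le> 2 * \<epsilon>"
      using \<open>dist c z \<le> 2 * \<epsilon>\<close> by (simp add: e_def dist_norm norm_minus_commute)
    have zx: "z - x = (3 * \<epsilon>) *\<^sub>R u + e" by (simp add: e_def c_def)
    have "\<bar>f' x e\<bar> \<le> norm (f' x) * (2 * \<epsilon>)"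
      using norm_blinfun[of "f' x" e] mult_left_mono[OF e norm_ge_zero[of "f' x"]] by simp
    moreover have "3 * \<epsilon> * norm (f' x) \<le> 3 * \<epsilon> * f' x u"
      using u(2) \<open>0 < \<epsilon>\<close> by simp
    ultimately have slope: "\<epsilon> * norm (f' x) \<le> f' x (z - x)"
      unfolding zx by (simp add: blinfun.add_right blinfun.scaleR_right abs_le_iff algebra_simps)
    have "norm (z - x) \<le> 5 * \<epsilon>"
      using zx e u norm_triangle_ineq[of "(3 * \<epsilon>) *\<^sub>R u" e] \<open>0 < \<epsilon>\<close> by simp
    then have "M * (norm (z - x))\<^sup>2 \<le> M * (5 * \<epsilon>)\<^sup>2"
      using order_trans[OF norm_ge_zero bound] by (intro mult_left_mono power_mono) auto
    also have "\<dots> < \<epsilon> * norm (f' x)"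
      using large \<open>0 < \<epsilon>\<close> by (simp add: power2_eq_square)
    finally show "f x < f z"
      using taylor_lower_bound[OF bound, of x "z - x"] slope by simp
  qed
qed

lemma uphill_ball_near_saddle_at_scale:
  fixes m u x :: 'a and d \<delta> L K \<epsilon> :: real
  defines "\<mu> \<equiv> f'' m u u" and "B \<equiv> norm (f'' m)"
  assumes u: "norm u = 1" and "0 \<le> \<delta>"
    and model: "\<And>z. norm (z - m) < d \<Longrightarrow>
      \<bar>f z - f m - f'' m (z - m) (z - m) / 2\<bar> \<le> \<delta> * (norm (z - m))\<^sup>2"
    and gap: "0 < (L\<^sup>2 * \<mu> - B * (4 * L + 4)) / 2 - \<delta> * (L + 2)\<^sup>2 - (B / 2 + \<delta>) * K\<^sup>2"
    and "0 \<le> K" "K + 3 \<le> L" "0 < \<epsilon>" "(L + 2) * \<epsilon> < d"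
    and x: "norm (x - m) \<le> K * \<epsilon>"
  shows "uphill_ball f x (2 * \<epsilon>) ((L + K + 2) * \<epsilon>)"
proof (rule uphill_ballI)
  \<comment> \<open>\<epsilon>^2 times the gap bounds f z - f x from below for z in the ball around m + L\<epsilon>u\<close>
  define c where "c = m + (L * \<epsilon>) *\<^sub>R u"
  have "0 \<le> L * \<epsilon>" using \<open>K + 3 \<le> L\<close> \<open>0 \<le> K\<close> \<open>0 < \<epsilon>\<close> by simp
  have "K * \<epsilon> < (L + 2) * \<epsilon>" using \<open>K + 3 \<le> L\<close> \<open>0 < \<epsilon>\<close> by simp
  have "dist x c = norm ((L * \<epsilon>) *\<^sub>R u - (x - m))"
    by (simp add: c_def dist_norm norm_minus_commute algebra_simps)
  then have "L * \<epsilon> - K * \<epsilon> \<le> dist x c" "dist x c \<le> L * \<epsilon> + K * \<epsilon>"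
    using u x \<open>0 \<le> L * \<epsilon>\<close> norm_triangle_ineq2[of "(L * \<epsilon>) *\<^sub>R u" "x - m"]
      norm_triangle_ineq4[of "(L * \<epsilon>) *\<^sub>R u" "x - m"]
    by auto
  moreover have "(K + 2) * \<epsilon> < L * \<epsilon>"
    using \<open>K + 3 \<le> L\<close> \<open>0 < \<epsilon>\<close> by (intro mult_strict_right_mono) auto
  ultimately show "2 * \<epsilon> < dist x c" "dist x c + 2 * \<epsilon> \<le> (L + K + 2) * \<epsilon>"
    by (auto simp: algebra_simps)
  fix z assume "dist c z \<le> 2 * \<epsilon>"
  then have z: "norm (z - m - (L * \<epsilon>) *\<^sub>R u) \<le> 2 * \<epsilon>"
    by (simp add: c_def dist_norm norm_minus_commute algebra_simps)
  have "norm (z - m) \<le> L * \<epsilon> + 2 * \<epsilon>"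
    using norm_triangle_ineq[of "(L * \<epsilon>) *\<^sub>R u" "z - m - (L * \<epsilon>) *\<^sub>R u"] z u \<open>0 \<le> L * \<epsilon>\<close> by simp
  then have "f m + ((L * \<epsilon>)\<^sup>2 * \<mu> - B * (2 * (L * \<epsilon>) * (2 * \<epsilon>) + (2 * \<epsilon>)\<^sup>2)) / 2
      - \<delta> * (L * \<epsilon> + 2 * \<epsilon>)\<^sup>2 \<le> f z"
    unfolding \<mu>_def B_def using \<open>(L + 2) * \<epsilon> < d\<close>
    by (intro quadratic_model_lower_bound_near_ray[OF model \<open>0 \<le> \<delta>\<close> u \<open>0 \<le> L * \<epsilon>\<close> z])
      (simp add: algebra_simps)
  moreover have "f x \<le> f m + (B / 2 + \<delta>) * (K * \<epsilon>)\<^sup>2"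
    unfolding B_def using x \<open>K * \<epsilon> < (L + 2) * \<epsilon>\<close> \<open>(L + 2) * \<epsilon> < d\<close>
    by (intro quadratic_model_upper_bound[OF model \<open>0 \<le> \<delta>\<close> x]) simp
  moreover have "0 < \<epsilon>\<^sup>2 * ((L\<^sup>2 * \<mu> - B * (4 * L + 4)) / 2 - \<delta> * (L + 2)\<^sup>2 - (B / 2 + \<delta>) * K\<^sup>2)"
    using gap \<open>0 < \<epsilon>\<close> by simp
  moreover have "\<epsilon>\<^sup>2 * ((L\<^sup>2 * \<mu> - B * (4 * L + 4)) / 2 - \<delta> * (L + 2)\<^sup>2 - (B / 2 + \<delta>) * K\<^sup>2)
    = ((L * \<epsilon>)\<^sup>2 * \<mu> - B * (2 * (L * \<epsilon>) * (2 * \<epsilon>) + (2 * \<epsilon>)\<^sup>2)) / 2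
      - \<delta> * (L * \<epsilon> + 2 * \<epsilon>)\<^sup>2 - (B / 2 + \<delta>) * (K * \<epsilon>)\<^sup>2"
    by (simp add: power2_eq_square field_simps)
  ultimately show "f x < f z" by linarith
qed

lemma continuous_f': "continuous_on UNIV f'"
  using has_derivative_continuous[OF has_derivative_f']
  by (simp add: continuous_on_eq_continuous_at)

lemma uphill_ball_near_saddle:
  assumes crit: "f' m = 0" and nondeg: "\<And>h. f'' m h = 0 \<Longrightarrow> h = 0"
    and not_max: "\<not> strict_local_max f m" and "0 \<le> K"
  shows "\<exists>L>0. \<forall>\<^sub>F \<epsilon> in at_right 0. \<forall>x. norm (x - m) \<le> K * \<epsilon> \<longrightarrow> uphill_ball f x (2 * \<epsilon>) (L * \<epsilon>)"
proof -
  obtain u where u: "norm u = 1" "0 < f'' m u u"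
    using exists_ascent_direction_at_saddle[OF crit nondeg not_max] by blast
  define \<mu> where "\<mu> = f'' m u u"
  define B where "B = norm (f'' m)"
  have "\<forall>\<^sub>F L in at_top. K + 3 \<le> L \<and>
      0 < (L\<^sup>2 * \<mu> - B * (4 * L + 4)) / 2 - \<mu> / 32 * (L + 2)\<^sup>2 - (B / 2 + \<mu> / 32) * K\<^sup>2"
    \<comment> \<open>a quadratic in L with leading coefficient 15\<mu>/32 > 0\<close>
    using u(2) unfolding \<mu>_def by (intro eventually_conj eventually_ge_at_top) real_asymp
  then obtain L where L: "K + 3 \<le> L"
    "0 < (L\<^sup>2 * \<mu> - B * (4 * L + 4)) / 2 - \<mu> / 32 * (L + 2)\<^sup>2 - (B / 2 + \<mu> / 32) * K\<^sup>2"
    unfolding eventually_at_top_linorder by (meson order_refl)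
  obtain d where "d > 0" and d: "\<forall>y. norm y < d \<longrightarrow>
      \<bar>f (m + y) - f m - f' m y - f'' m y y / 2\<bar> \<le> \<mu> / 32 * (norm y)\<^sup>2"
    using second_order_expansion[of "\<mu> / 32"] u(2) unfolding \<mu>_def by auto
  have "0 \<le> \<mu> / 32" using u(2) by (simp add: \<mu>_def)
  have model: "\<bar>f z - f m - f'' m (z - m) (z - m) / 2\<bar> \<le> \<mu> / 32 * (norm (z - m))\<^sup>2"
    if "norm (z - m) < d" for z
    using d[rule_format, OF that] crit by simp
  have "\<forall>\<^sub>F \<epsilon> in at_right 0. 0 < \<epsilon> \<and> (L + 2) * \<epsilon> < d"
    unfolding eventually_at_right_field using \<open>d > 0\<close> L(1) \<open>0 \<le> K\<close>
    by (intro exI[of _ "d / (L + 2)"]) (auto simp: field_simps)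
  then have "\<forall>\<^sub>F \<epsilon> in at_right 0. \<forall>x. norm (x - m) \<le> K * \<epsilon> \<longrightarrow>
      uphill_ball f x (2 * \<epsilon>) ((L + K + 2) * \<epsilon>)"
    by (rule eventually_mono) (auto intro: uphill_ball_near_saddle_at_scale[OF u(1)
        \<open>0 \<le> \<mu> / 32\<close>[unfolded \<mu>_def] model[unfolded \<mu>_def] L(2)[unfolded \<mu>_def B_def]
        \<open>0 \<le> K\<close> L(1)])
  moreover have "0 < L + K + 2" using L(1) \<open>0 \<le> K\<close> by simp
  ultimately show ?thesis by blast
qed

lemma small_gradient_near_critical_point:
  assumes morse: "morse f' f''" and "compact X"
  shows "\<exists>l>0. \<exists>g>0. \<forall>x\<in>X. norm (f' x) < g \<longrightarrow> (\<exists>m. f' m = 0 \<and> l * norm (x - m) \<le> norm (f' x))"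
proof -
  define S where "S = {m. f' m = 0}"
  have "finite S" using morse by (simp add: morse_def S_def)
  have "\<forall>m\<in>S. \<exists>l>0. \<exists>d>0. \<forall>x. norm (x - m) < d \<longrightarrow> l * norm (x - m) \<le> norm (f' x)"
    using gradient_bounded_below_near_critical morse by (simp add: morse_def S_def)
  then obtain l d where ld: "\<And>m. m \<in> S \<Longrightarrow> l m > 0 \<and> d m > 0 \<and>
      (\<forall>x. norm (x - m) < d m \<longrightarrow> l m * norm (x - m) \<le> norm (f' x))"
    by metis
  obtain l0 where "l0 > 0" and l0: "\<forall>m\<in>S. l0 \<le> l m"
    using finite_pos_lower_bound[OF \<open>finite S\<close>, of l] ld by blast
  obtain d0 where "d0 > 0" and d0: "\<forall>m\<in>S. d0 \<le> d m"
    using finite_pos_lower_bound[OF \<open>finite S\<close>, of d] ld by blast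
  define R where "R = X - (\<Union>m\<in>S. ball m d0)"
  have "compact R" unfolding R_def using \<open>compact X\<close> by (intro compact_diff) auto
  moreover have "continuous_on R (\<lambda>x. norm (f' x))"
    by (intro continuous_on_norm continuous_on_subset[OF continuous_f']) auto
  moreover have "0 < norm (f' x)" if "x \<in> R" for x
    using that \<open>d0 > 0\<close> by (auto simp: R_def S_def)
  ultimately obtain g where "g > 0" and g: "\<forall>x\<in>R. g \<le> norm (f' x)"
    using compact_continuous_pos_lower_bound by blast
  have "\<exists>m. f' m = 0 \<and> l0 * norm (x - m) \<le> norm (f' x)"
    if "x \<in> X" and small: "norm (f' x) < g" for x
  proof -
    obtain m where "m \<in> S" "dist m x < d0"
      using \<open>x \<in> X\<close> small g by (force simp: R_def)
    then have "norm (x - m) < d m" using d0 by (auto simp: dist_norm norm_minus_commute)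
    then have "l0 * norm (x - m) \<le> norm (f' x)"
      using ld[OF \<open>m \<in> S\<close>] l0 \<open>m \<in> S\<close> mult_right_mono[of l0 "l m" "norm (x - m)"] by force
    then show ?thesis using \<open>m \<in> S\<close> by (auto simp: S_def)
  qed
  then show ?thesis using \<open>l0 > 0\<close> \<open>g > 0\<close> by blast
qed

lemma uphill_balls_near_saddles:
  assumes morse: "morse f' f''" and "0 \<le> K"
  shows "\<exists>L>0. \<forall>\<^sub>F \<epsilon> in at_right 0. \<forall>m. f' m = 0 \<and> \<not> strict_local_max f m \<longrightarrow>
    (\<forall>x. norm (x - m) \<le> K * \<epsilon> \<longrightarrow> uphill_ball f x (2 * \<epsilon>) (L * \<epsilon>))"
proof -
  define S where "S = {m. f' m = 0 \<and> \<not> strict_local_max f m}"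
  have "finite S"
    by (rule finite_subset[of _ "{m. f' m = 0}"]) (use morse in \<open>auto simp: S_def morse_def\<close>)
  have "\<forall>m\<in>S. \<exists>L>0. \<forall>\<^sub>F \<epsilon> in at_right 0. \<forall>x. norm (x - m) \<le> K * \<epsilon> \<longrightarrow>
      uphill_ball f x (2 * \<epsilon>) (L * \<epsilon>)"
    using morse \<open>0 \<le> K\<close> by (auto simp: S_def morse_def intro!: uphill_ball_near_saddle)
  from bchoice[OF this] obtain L where L: "\<forall>m\<in>S. \<forall>\<^sub>F \<epsilon> in at_right 0.
      \<forall>x. norm (x - m) \<le> K * \<epsilon> \<longrightarrow> uphill_ball f x (2 * \<epsilon>) (L m * \<epsilon>)"
    by blast
  define L0 where "L0 = Max (insert 1 (L ` S))"
  have "1 \<le> L0" "\<And>m. m \<in> S \<Longrightarrow> L m \<le> L0"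
    using \<open>finite S\<close> by (auto simp: L0_def)
  have "\<forall>\<^sub>F \<epsilon> in at_right 0. \<forall>m\<in>S. \<forall>x. norm (x - m) \<le> K * \<epsilon> \<longrightarrow>
      uphill_ball f x (2 * \<epsilon>) (L m * \<epsilon>)"
    using \<open>finite S\<close> L by (simp add: eventually_ball_finite)
  then have "\<forall>\<^sub>F \<epsilon> in at_right 0. \<forall>m\<in>S. \<forall>x. norm (x - m) \<le> K * \<epsilon> \<longrightarrow>
      uphill_ball f x (2 * \<epsilon>) (L0 * \<epsilon>)"
    using eventually_at_right_less
  proof eventually_elim
    case (elim \<epsilon>)
    show ?case
    proof (intro ballI allI impI)
      fix m x assume "m \<in> S" "norm (x - m) \<le> K * \<epsilon>"
      with elim have "uphill_ball f x (2 * \<epsilon>) (L m * \<epsilon>)" by blast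
      then show "uphill_ball f x (2 * \<epsilon>) (L0 * \<epsilon>)"
        using \<open>\<And>m. m \<in> S \<Longrightarrow> L m \<le> L0\<close>[OF \<open>m \<in> S\<close>] \<open>0 < \<epsilon>\<close> by (elim uphill_ball_mono) simp
    qed
  qed
  moreover have "0 < L0" using \<open>1 \<le> L0\<close> by simp
  ultimately show ?thesis by (intro exI[of _ L0]) (simp add: S_def)
qed

lemma uphill_balls_away_from_modes:
  assumes morse: "morse f' f''" and bound: "\<And>x. norm (f'' x) \<le> M" and "compact X"
  shows "\<exists>c1>0. \<exists>c2>0. \<forall>\<^sub>F \<epsilon> in at_right 0. \<forall>x\<in>X.
    x \<notin> (\<Union>m\<in>{m. strict_local_max f m}. ball m (c1 * \<epsilon>)) \<longrightarrow> uphill_ball f x (2 * \<epsilon>) (c2 * \<epsilon>)"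
proof -
  obtain l g where "l > 0" "g > 0" and near_critical: "\<And>x. x \<in> X \<Longrightarrow> norm (f' x) < g \<Longrightarrow>
      \<exists>m. f' m = 0 \<and> l * norm (x - m) \<le> norm (f' x)"
    using small_gradient_near_critical_point[OF morse \<open>compact X\<close>] by blast
  have "0 \<le> M" using order_trans[OF norm_ge_zero bound] .
  define K where "K = 25 * M / l"
  have "0 \<le> K" using \<open>0 \<le> M\<close> \<open>l > 0\<close> by (simp add: K_def)
  obtain L where "0 < L" and saddles: "\<forall>\<^sub>F \<epsilon> in at_right 0. \<forall>m. f' m = 0 \<and> \<not> strict_local_max f m \<longrightarrow>
      (\<forall>x. norm (x - m) \<le> K * \<epsilon> \<longrightarrow> uphill_ball f x (2 * \<epsilon>) (L * \<epsilon>))"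
    using uphill_balls_near_saddles[OF morse \<open>0 \<le> K\<close>] by blast
  define c2 where "c2 = max 5 L"
  have "((\<lambda>\<epsilon>. 25 * M * \<epsilon>) \<longlongrightarrow> 0) (at_right 0)"
    by (auto intro!: tendsto_eq_intros)
  then have "\<forall>\<^sub>F \<epsilon> in at_right 0. 25 * M * \<epsilon> < g" using \<open>g > 0\<close> by (rule order_tendstoD)
  moreover note saddles
  ultimately have "\<forall>\<^sub>F \<epsilon> in at_right 0. \<forall>x\<in>X.
      x \<notin> (\<Union>m\<in>{m. strict_local_max f m}. ball m ((K + 1) * \<epsilon>)) \<longrightarrow> uphill_ball f x (2 * \<epsilon>) (c2 * \<epsilon>)"
    using eventually_at_right_less
  proof eventually_elim
    case (elim \<epsilon>)
    show ?case
    proof (intro ballI impI)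
      fix x assume "x \<in> X" and away: "x \<notin> (\<Union>m\<in>{m. strict_local_max f m}. ball m ((K + 1) * \<epsilon>))"
      show "uphill_ball f x (2 * \<epsilon>) (c2 * \<epsilon>)"
      proof (cases "25 * M * \<epsilon> < norm (f' x)")
        case True
        then have "uphill_ball f x (2 * \<epsilon>) (5 * \<epsilon>)"
          using uphill_ball_large_gradient[OF bound \<open>0 < \<epsilon>\<close>] by blast
        then show ?thesis using \<open>0 < \<epsilon>\<close> by (elim uphill_ball_mono) (simp add: c2_def)
      next
        case False
        then obtain m where "f' m = 0" and "l * norm (x - m) \<le> 25 * M * \<epsilon>"
          using near_critical[OF \<open>x \<in> X\<close>] elim by fastforce
        then have "norm (x - m) \<le> K * \<epsilon>"
          using \<open>l > 0\<close> by (simp add: K_def field_simps)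
        have "\<not> strict_local_max f m"
          using away \<open>norm (x - m) \<le> K * \<epsilon>\<close> elim
          by (auto simp: dist_norm norm_minus_commute algebra_simps)
        with elim \<open>f' m = 0\<close> \<open>norm (x - m) \<le> K * \<epsilon>\<close>
        have "uphill_ball f x (2 * \<epsilon>) (L * \<epsilon>)" by blast
        then show ?thesis using \<open>0 < \<epsilon>\<close> by (elim uphill_ball_mono) (simp add: c2_def)
      qed
    qed
  qed
  moreover have "0 < K + 1" "0 < c2" using \<open>0 \<le> K\<close> by (auto simp: c2_def)
  ultimately show ?thesis by blast
qed

end

theorem lemma4:
  fixes p :: "'a::euclidean_space \<Rightarrow> real"
    and D1 :: "'a \<Rightarrow> ('a \<Rightarrow>\<^sub>L real)"
    and D2 :: "'a \<Rightarrow> ('a \<Rightarrow>\<^sub>L ('a \<Rightarrow>\<^sub>L real))"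
    and D3 :: "'a \<Rightarrow> ('a \<Rightarrow>\<^sub>L ('a \<Rightarrow>\<^sub>L ('a \<Rightarrow>\<^sub>L real)))"
    and CC :: "'a set" and a r C :: real
  assumes density: "\<forall>x. 0 \<le> p x" "(p has_integral 1) UNIV"
    and CC: "compact CC"
    and p_bdd: "bounded (range p)" and p_cont: "continuous_on UNIV p"
    and a_pos: "a > 0" and p_lower: "\<forall>x\<in>CC. a \<le> p x"
    and D1: "\<forall>x. (p has_derivative blinfun_apply (D1 x)) (at x)"
    and D2: "\<forall>x. (D1 has_derivative blinfun_apply (D2 x)) (at x)"
    and D3: "\<forall>x. (D2 has_derivative blinfun_apply (D3 x)) (at x)"
    and D_cont: "continuous_on UNIV D1" "continuous_on UNIV D2" "continuous_on UNIV D3"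
    and D_bdd: "bounded (range D1)" "bounded (range D2)" "bounded (range D3)"
    and morse: "morse D1 D2"
    and r_pos: "r > 0" and C_pos: "C > 0"
  shows "\<exists>c1>0. \<exists>c2>0. \<exists>N::nat. \<forall>n\<ge>N.
     (let eps = (r * ln (real n) / real n) powr (1 / real DIM('a)) in
      \<forall>x\<in>CC. x \<notin> (\<Union>m\<in>{m. strict_local_max p m}. ball m (c1 * eps)) \<longrightarrow>
        (\<exists>c. (\<forall>z\<in>cball c (2 * eps).
                 dist z x \<le> c2 * (C * ln (real n) / (real n * p x)) powr (1 / real DIM('a))) \<and>
             x \<notin> cball c (2 * eps) \<and>
             (\<forall>z\<in>cball c (2 * eps). p z > p x)))"
proof -
  \<comment> \<open>only the C^2 hypotheses, the Morse condition and the bounds on p are needed\<close>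
  interpret twice_cont_differentiable p D1 D2
    using D1 D2 D_cont(2) by unfold_locales auto
  obtain M where "\<And>x. norm (D2 x) \<le> M" using D_bdd(2) by (auto simp: bounded_iff)
  from uphill_balls_away_from_modes[OF morse this CC] obtain c1 c2 where "c1 > 0" "c2 > 0" and
    balls: "\<forall>\<^sub>F \<epsilon> in at_right 0. \<forall>x\<in>CC. x \<notin> (\<Union>m\<in>{m. strict_local_max p m}. ball m (c1 * \<epsilon>))
      \<longrightarrow> uphill_ball p x (2 * \<epsilon>) (c2 * \<epsilon>)"
    by blast
  obtain B where "0 < B" and "\<forall>x. \<bar>p x\<bar> \<le> B"
    using p_bdd by (auto simp: bounded_pos)
  then have "p x \<le> B" for x by (meson abs_le_D1)
  moreover have "0 < p x" if "x \<in> CC" for x using a_pos p_lower that by fastforce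
  moreover have "0 < 1 / real DIM('a)" by simp
  ultimately obtain N where "\<forall>n\<ge>N. \<forall>x\<in>CC.
      x \<notin> (\<Union>m\<in>{m. strict_local_max p m}.
        ball m (c1 * (r * ln (real n) / real n) powr (1 / real DIM('a))))
      \<longrightarrow> uphill_ball p x (2 * (r * ln (real n) / real n) powr (1 / real DIM('a)))
        (c2 * (r * B / C) powr (1 / real DIM('a)) *
         (C * ln (real n) / (real n * p x)) powr (1 / real DIM('a)))"
    using uphill_balls_at_sample_scale[OF balls \<open>c2 > 0\<close> r_pos C_pos] by blast
  moreover have "0 < c2 * (r * B / C) powr (1 / real DIM('a))"
    using \<open>c2 > 0\<close> r_pos \<open>0 < B\<close> C_pos by simp
  ultimately show ?thesis
    using \<open>c1 > 0\<close> unfolding Let_def uphill_ball_def by blast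
qed

end
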